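(* Fix $\alpha,\beta\in(0,1)$ and consider the decoupled process with parameters $(G,r,T,\alpha,\beta)$. For $t\in\mathbb{N}$ let $u,v$ be chosen uniformly and independently from $B_{t,G}(r)$, independently of the process, and let $p_t=\Pr[\mathrm{origin}_t(u)=\mathrm{origin}_t(v)]$ (probability over both the process and the choice of $u,v$). Let $\lambda(t)=\dfrac{|\{x:g_t(x)=+1\}|-|\{x:g_t(x)=-1\}|}{|B_{t,G}(r)|}$. If $p_t\to0$ as $t\to\infty$, then for every $\eta>0$ there is $t_0$ such that $\Pr[|\lambda(t)-\mathbb{E}\lambda(t)|>\eta]<\eta$ for all $t\ge t_0$. Moreover, if $p_t\le e^{-c_1t^{c_2}}$ for constants $c_1,c_2>0$, then there are constants $c_3,c_4,c_5,c_6>0$ with $\Pr[|\lambda(t)-\mathbb{E}\lambda(t)|>e^{-c_3t^{c_4}}]\le e^{-c_5t^{c_6}}$ for all sufficiently large $t$.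
   Context: Decoupled process. Fix $\alpha,\beta\in[0,1]$, a connected locally finite undirected graph $G$, root $r$, and a BFS spanning tree $T$ of $G$ rooted at $r$, oriented away from $r$, with parent map $p$. Let $Z_0=+1$, $Z_1,Z_2,\dots$ i.i.d. uniform on $\{-1,+1\}$, $Z_\infty=\bot$. Counter $\mathrm{count}_0=1$; $\mathrm{origin}_0(r)=0$ (and always $0$), $\mathrm{origin}_0(v)=\infty$ for $v\ne r$; $g_t(v)=Z_{\mathrm{origin}_t(v)}$. Update from $t$ to $t+1$ (independent choices): if $g_t(v)=g_t(p(v))=\bot$ then $\mathrm{origin}_{t+1}(v)=\infty$; nodes with $g_t(v)=\bot\ne g_t(p(v))$ are processed sequentially in a fixed order: w.p. $1-\alpha$, $\mathrm{origin}_{t+1}(v)=\mathrm{origin}_t(p(v))$; w.p. $\alpha$, $\mathrm{origin}_{t+1}(v)$ is the current counter value and the counter is then incremented; if $g_t(v)\ne\bot$, $v\ne r$: w.p. $\beta$, $\mathrm{origin}_{t+1}(v)=\mathrm{origin}_t(p(v))$, otherwise unchanged. $B_{t,G}(r)=\{x:d_G(r,x)\le t\}$; this is exactly the set of nodes with $g_t(x)\ne\bot$. *)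

theory Defs
  imports "HOL-Probability.Probability"
begin

text \<open>Graph distance d_G(x,y): length of a shortest walk (connectedness is assumed separately).\<close>
definition gdist :: "('a \<Rightarrow> 'a \<Rightarrow> bool) \<Rightarrow> 'a \<Rightarrow> 'a \<Rightarrow> nat" where
  "gdist E x y = (LEAST n. (E ^^ n) x y)"

definition gball :: "('a \<Rightarrow> 'a \<Rightarrow> bool) \<Rightarrow> 'a \<Rightarrow> nat \<Rightarrow> 'a set" where
  "gball E r t = {x. gdist E r x \<le> t}"

definition conn_lf_graph :: "('a \<Rightarrow> 'a \<Rightarrow> bool) \<Rightarrow> bool" where
  "conn_lf_graph E \<longleftrightarrow> (\<forall>x y. E x y \<longrightarrow> E y x) \<and> (\<forall>x. finite {y. E x y})
     \<and> (\<forall>x y. E\<^sup>*\<^sup>* x y)"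

text \<open>Parent map p of a BFS spanning tree of G rooted at r: every non-root vertex is joined
  by an edge of G to its parent, which is one step closer to r.\<close>
definition bfs_parent :: "('a \<Rightarrow> 'a \<Rightarrow> bool) \<Rightarrow> 'a \<Rightarrow> ('a \<Rightarrow> 'a) \<Rightarrow> bool" where
  "bfs_parent E r p \<longleftrightarrow>
     (\<forall>v. v \<noteq> r \<longrightarrow> E (p v) v \<and> gdist E r v = Suc (gdist E r (p v)))"

text \<open>State: (origin, counter, Z).  origin v = None encodes origin = \<infinity>.
  The signs Z_k (k \<ge> 1) are sampled (uniform on {-1,+1}, independently) at the moment the index k
  is allocated by the counter; Z_0 = +1.  Entries of Z at indices not yet allocated are never
  referenced.\<close>
type_synonym 'a dstate = "('a \<Rightarrow> nat option) \<times> nat \<times> (nat \<Rightarrow> int)"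

definition dorigin :: "'a dstate \<Rightarrow> 'a \<Rightarrow> nat option" where
  "dorigin s = fst s"

text \<open>g_t(v) = Z_{origin_t(v)}, with None encoding \<bottom>.\<close>
definition dg :: "'a dstate \<Rightarrow> 'a \<Rightarrow> int option" where
  "dg s v = map_option (snd (snd s)) (fst s v)"

definition sign_pmf :: "int pmf" where
  "sign_pmf = pmf_of_set {-1, 1}"

text \<open>Processing one node v with g_t(v) = \<bottom> \<noteq> g_t(p v); og is the origin map at time t.\<close>
definition new_node :: "real \<Rightarrow> ('a \<Rightarrow> 'a) \<Rightarrow> ('a \<Rightarrow> nat option) \<Rightarrow> 'a \<Rightarrow> 'a dstate \<Rightarrow> 'a dstate pmf" where
  "new_node \<alpha> p og v s = (case s of (og', c, Z) \<Rightarrow>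
     bind_pmf (bernoulli_pmf \<alpha>) (\<lambda>b. if b
        then bind_pmf sign_pmf (\<lambda>z. return_pmf (og'(v := Some c), Suc c, Z(c := z)))
        else return_pmf (og'(v := og (p v)), c, Z)))"

fun seq_new :: "real \<Rightarrow> ('a \<Rightarrow> 'a) \<Rightarrow> ('a \<Rightarrow> nat option) \<Rightarrow> 'a list \<Rightarrow> 'a dstate \<Rightarrow> 'a dstate pmf" where
  "seq_new \<alpha> p og [] s = return_pmf s"
| "seq_new \<alpha> p og (v # vs) s = bind_pmf (new_node \<alpha> p og v s) (seq_new \<alpha> p og vs)"

text \<open>Processing one node v \<noteq> r with g_t(v) \<noteq> \<bottom>.\<close>
definition old_node :: "real \<Rightarrow> ('a \<Rightarrow> 'a) \<Rightarrow> ('a \<Rightarrow> nat option) \<Rightarrow> 'a \<Rightarrow> 'a dstate \<Rightarrow> 'a dstate pmf" where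
  "old_node \<beta> p og v s = (case s of (og', c, Z) \<Rightarrow>
     bind_pmf (bernoulli_pmf \<beta>) (\<lambda>b. return_pmf (if b then og'(v := og (p v)) else og', c, Z)))"

fun seq_old :: "real \<Rightarrow> ('a \<Rightarrow> 'a) \<Rightarrow> ('a \<Rightarrow> nat option) \<Rightarrow> 'a list \<Rightarrow> 'a dstate \<Rightarrow> 'a dstate pmf" where
  "seq_old \<beta> p og [] s = return_pmf s"
| "seq_old \<beta> p og (v # vs) s = bind_pmf (old_node \<beta> p og v s) (seq_old \<beta> p og vs)"

text \<open>One step t \<rightarrow> t+1.  The fixed processing order of the new nodes is the order of the
  vertex type.  Nodes with g_t(v) = g_t(p v) = \<bottom> keep origin \<infinity>; the root keeps origin 0.\<close>
definition dstep :: "real \<Rightarrow> real \<Rightarrow> ('a::linorder \<Rightarrow> 'a) \<Rightarrow> 'a \<Rightarrow> 'a dstate \<Rightarrow> 'a dstate pmf" where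
  "dstep \<alpha> \<beta> p r s = (case s of (og, c, Z) \<Rightarrow>
     bind_pmf (seq_new \<alpha> p og (sorted_list_of_set {v. og v = None \<and> og (p v) \<noteq> None}) (og, c, Z))
       (seq_old \<beta> p og (sorted_list_of_set {v. og v \<noteq> None \<and> v \<noteq> r})))"

definition dinit :: "'a \<Rightarrow> 'a dstate" where
  "dinit r = ((\<lambda>v. if v = r then Some 0 else None), 1, (\<lambda>_. 1))"

primrec dproc :: "real \<Rightarrow> real \<Rightarrow> ('a::linorder \<Rightarrow> 'a) \<Rightarrow> 'a \<Rightarrow> nat \<Rightarrow> 'a dstate pmf" where
  "dproc \<alpha> \<beta> p r 0 = return_pmf (dinit r)"
| "dproc \<alpha> \<beta> p r (Suc t) = bind_pmf (dproc \<alpha> \<beta> p r t) (dstep \<alpha> \<beta> p r)"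

definition coalesce_prob :: "('a \<Rightarrow> 'a \<Rightarrow> bool) \<Rightarrow> 'a::linorder \<Rightarrow> ('a \<Rightarrow> 'a) \<Rightarrow> real \<Rightarrow> real \<Rightarrow> nat \<Rightarrow> real" where
  "coalesce_prob E r p \<alpha> \<beta> t =
     measure_pmf.prob
       (pair_pmf (dproc \<alpha> \<beta> p r t) (pair_pmf (pmf_of_set (gball E r t)) (pmf_of_set (gball E r t))))
       {(s, u, v). dorigin s u = dorigin s v}"

definition dlambda :: "('a \<Rightarrow> 'a \<Rightarrow> bool) \<Rightarrow> 'a \<Rightarrow> nat \<Rightarrow> 'a dstate \<Rightarrow> real" where
  "dlambda E r t s = (real (card {x. dg s x = Some 1}) - real (card {x. dg s x = Some (-1)}))
                      / real (card (gball E r t))"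

end

theory Submission
  imports Defs
begin

(* By Chebyshev's inequality it suffices to show E[lambda(t)^2] <= p_t.  Since lambda(t) is the
   average of the spins g_t(x) over the ball, E[lambda(t)^2] is the average of E[g_t(u) g_t(v)]
   over pairs u, v.  When origin_t(u) = a and origin_t(v) = b differ, negating the sign
   Z_(max a b) leaves the law of the process and all origins unchanged (each sign is uniform,
   drawn once, and never consulted by the dynamics) but negates g_t(u) g_t(v); so only pairs
   with a common origin contribute, each at most its probability. *)

fun bind_list :: "('b \<Rightarrow> 's \<Rightarrow> 's pmf) \<Rightarrow> 'b list \<Rightarrow> 's \<Rightarrow> 's pmf" where
  "bind_list f [] s = return_pmf s"
| "bind_list f (v # vs) s = bind_pmf (f v s) (bind_list f vs)"

lemma seq_new_eq_bind_list: "seq_new \<alpha> p og vs = bind_list (new_node \<alpha> p og) vs"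
  by (induction vs) (auto intro!: ext)

lemma seq_old_eq_bind_list: "seq_old \<beta> p og vs = bind_list (old_node \<beta> p og) vs"
  by (induction vs) (auto intro!: ext)

lemma dstep_eq_bind_list:
  "dstep \<alpha> \<beta> p r (og, c, Z) =
     bind_pmf (bind_list (new_node \<alpha> p og) (sorted_list_of_set {v. og v = None \<and> og (p v) \<noteq> None}) (og, c, Z))
       (bind_list (old_node \<beta> p og) (sorted_list_of_set {v. og v \<noteq> None \<and> v \<noteq> r}))"
  unfolding dstep_def seq_new_eq_bind_list seq_old_eq_bind_list by simp

lemma map_pmf_bind_list:
  assumes "\<And>v s. map_pmf h (f v s) = f v (h s)"
  shows "map_pmf h (bind_list f vs s) = bind_list f vs (h s)"
proof (induction vs arbitrary: s)
  case (Cons v vs)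
  have "map_pmf h (bind_list f (v # vs) s) = bind_pmf (f v s) (\<lambda>x. bind_list f vs (h x))"
    by (simp add: map_bind_pmf Cons.IH)
  also have "\<dots> = bind_pmf (map_pmf h (f v s)) (bind_list f vs)"
    by (simp add: bind_map_pmf)
  finally show ?case by (simp add: assms)
qed simp

lemma bind_list_invariant:
  assumes "P s" and "s' \<in> set_pmf (bind_list f vs s)"
    and "\<And>v s s'. v \<in> set vs \<Longrightarrow> P s \<Longrightarrow> s' \<in> set_pmf (f v s) \<Longrightarrow> P s'"
  shows "P s'"
  using assms
proof (induction vs arbitrary: s)
  case (Cons v vs)
  then obtain s1 where "s1 \<in> set_pmf (f v s)" "s' \<in> set_pmf (bind_list f vs s1)" by auto
  with Cons show ?case by (meson list.set_intros)
qed simp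

lemma finite_set_bind_list:
  assumes "\<And>v s. finite (set_pmf (f v s))"
  shows "finite (set_pmf (bind_list f vs s))"
  by (induction vs arbitrary: s) (auto simp: assms)

lemma finite_set_dproc: "finite (set_pmf (dproc \<alpha> \<beta> p r t))"
proof (induction t)
  case (Suc t)
  have "finite (set_pmf (new_node \<alpha> p og v s))" for og v and s :: "'a dstate"
    by (cases s) (auto simp: new_node_def sign_pmf_def)
  moreover have "finite (set_pmf (old_node \<beta> p og v s))" for og v and s :: "'a dstate"
    by (cases s) (auto simp: old_node_def)
  ultimately have "finite (set_pmf (dstep \<alpha> \<beta> p r s))" for s
    by (cases s) (auto simp: dstep_eq_bind_list intro!: finite_set_bind_list)
  with Suc show ?case by auto
qed simp

lemma integrable_dproc [simp]: "integrable (measure_pmf (dproc \<alpha> \<beta> p r t)) (f :: _ \<Rightarrow> real)"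
  by (rule integrable_measure_pmf_finite[OF finite_set_dproc])

text \<open>Entries of Z at unallocated indices are the deterministic initial value 1, so only
  allocated signs (k < counter) may be flipped.\<close>
definition flip_sign :: "nat \<Rightarrow> 'a dstate \<Rightarrow> 'a dstate" where
  "flip_sign k s = (case s of (og, c, Z) \<Rightarrow> if k < c then (og, c, Z(k := - Z k)) else s)"

lemma fst_flip_sign [simp]: "fst (flip_sign k s) = fst s"
  by (auto simp: flip_sign_def split: prod.splits)

lemma map_uminus_sign_pmf: "map_pmf uminus sign_pmf = sign_pmf"
  unfolding sign_pmf_def by (subst map_pmf_of_set_inj) (auto simp: inj_on_def insert_commute)

lemma map_flip_sign_new_node:
  "map_pmf (flip_sign k) (new_node \<alpha> p og v s) = new_node \<alpha> p og v (flip_sign k s)"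
proof -
  obtain og' c Z where s: "s = (og', c, Z)" by (cases s) auto
  consider "k < c" | "k = c" | "c < k" by linarith
  then show ?thesis
  proof cases
    case 2
    \<comment> \<open>the sign freshly drawn at index k is symmetric\<close>
    have "bind_pmf sign_pmf (\<lambda>z. return_pmf (flip_sign k (og'(v := Some c), Suc c, Z(c := z))))
        = bind_pmf (map_pmf uminus sign_pmf) (\<lambda>z. return_pmf (og'(v := Some c), Suc c, Z(c := z)))"
      unfolding bind_map_pmf using 2 by (simp add: flip_sign_def)
    then show ?thesis unfolding s new_node_def map_uminus_sign_pmf using 2
      by (auto simp: map_bind_pmf flip_sign_def intro!: bind_pmf_cong)
  qed (auto simp: s new_node_def flip_sign_def map_bind_pmf fun_upd_twist intro!: bind_pmf_cong)
qed

lemma map_flip_sign_old_node: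
  "map_pmf (flip_sign k) (old_node \<beta> p og v s) = old_node \<beta> p og v (flip_sign k s)"
  by (cases s) (auto simp: old_node_def flip_sign_def map_bind_pmf intro!: bind_pmf_cong)

lemma map_flip_sign_dstep: "map_pmf (flip_sign k) (dstep \<alpha> \<beta> p r s) = dstep \<alpha> \<beta> p r (flip_sign k s)"
proof -
  obtain og c Z where s: "s = (og, c, Z)" by (cases s) auto
  obtain c' Z' where s': "flip_sign k s = (og, c', Z')"
    unfolding s flip_sign_def by (cases "k < c") auto
  let ?new = "bind_list (new_node \<alpha> p og) (sorted_list_of_set {v. og v = None \<and> og (p v) \<noteq> None})"
  let ?old = "bind_list (old_node \<beta> p og) (sorted_list_of_set {v. og v \<noteq> None \<and> v \<noteq> r})"
  have "map_pmf (flip_sign k) (dstep \<alpha> \<beta> p r s) = bind_pmf (?new s) (\<lambda>x. ?old (flip_sign k x))"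
    by (simp add: s dstep_eq_bind_list map_bind_pmf map_pmf_bind_list map_flip_sign_old_node)
  also have "\<dots> = bind_pmf (map_pmf (flip_sign k) (?new s)) ?old"
    by (simp add: bind_map_pmf)
  also have "\<dots> = dstep \<alpha> \<beta> p r (flip_sign k s)"
    by (simp add: map_pmf_bind_list map_flip_sign_new_node s' dstep_eq_bind_list)
  finally show ?thesis .
qed

lemma map_flip_sign_dproc: "1 \<le> k \<Longrightarrow> map_pmf (flip_sign k) (dproc \<alpha> \<beta> p r t) = dproc \<alpha> \<beta> p r t"
proof (induction t)
  case (Suc t)
  have "map_pmf (flip_sign k) (dproc \<alpha> \<beta> p r (Suc t))
      = bind_pmf (map_pmf (flip_sign k) (dproc \<alpha> \<beta> p r t)) (dstep \<alpha> \<beta> p r)"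
    by (simp add: map_bind_pmf map_flip_sign_dstep bind_map_pmf)
  with Suc show ?case by simp
qed (simp add: flip_sign_def dinit_def)

lemma gdist_self [simp]: "gdist E r r = 0"
  unfolding gdist_def by (rule Least_eq_0) simp

definition well_formed :: "('a \<Rightarrow> 'a \<Rightarrow> bool) \<Rightarrow> 'a \<Rightarrow> ('a \<Rightarrow> 'a) \<Rightarrow> nat \<Rightarrow> 'a dstate \<Rightarrow> bool" where
  "well_formed E r p t s \<longleftrightarrow> dom (fst s) \<subseteq> gball E r t \<and> ran (fst s) \<subseteq> {..< fst (snd s)}
     \<and> (\<forall>x\<in>dom (fst s). x \<noteq> r \<longrightarrow> p x \<in> dom (fst s))"

definition step_invariant :: "('a \<Rightarrow> 'a) \<Rightarrow> ('a \<Rightarrow> nat option) \<Rightarrow> nat \<Rightarrow> 'a dstate \<Rightarrow> bool" where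
  "step_invariant p og c0 s \<longleftrightarrow> c0 \<le> fst (snd s) \<and> ran (fst s) \<subseteq> {..< fst (snd s)}
     \<and> dom og \<subseteq> dom (fst s) \<and> dom (fst s) \<subseteq> dom og \<union> p -` dom og"

lemma step_invariant_update:
  assumes "step_invariant p og c0 (og', c', Z')" and "c' \<le> c''"
    and "w = Some a" "a < c''" and "v \<in> dom og \<union> p -` dom og"
  shows "step_invariant p og c0 (og'(v := w), c'', Z'')"
  using assms ran_map_upd_Some[of og' v a] unfolding step_invariant_def by (auto simp: ran_def)

lemma step_invariant_new_node:
  assumes "step_invariant p og c0 s" "ran og \<subseteq> {..< c0}" "og (p v) \<noteq> None"
    and "s' \<in> set_pmf (new_node \<alpha> p og v s)"
  shows "step_invariant p og c0 s'"
proof -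
  obtain og' c Z where s: "s = (og', c, Z)" by (cases s) auto
  obtain a where a: "og (p v) = Some a" "a < c"
    using assms(1-3) unfolding s step_invariant_def by (auto simp: ran_def)
  from assms(4) consider z where "s' = (og'(v := Some c), Suc c, Z(c := z))"
    | "s' = (og'(v := og (p v)), c, Z)"
    unfolding s new_node_def by (auto split: if_splits)
  then show ?thesis
    by cases (use assms(1) a in \<open>auto simp: s intro!: step_invariant_update\<close>)
qed

lemma step_invariant_old_node:
  assumes "step_invariant p og c0 s" "ran og \<subseteq> {..< c0}" "og (p v) \<noteq> None"
    and "s' \<in> set_pmf (old_node \<beta> p og v s)"
  shows "step_invariant p og c0 s'"
proof -
  obtain og' c Z where s: "s = (og', c, Z)" by (cases s) auto
  obtain a where a: "og (p v) = Some a" "a < c"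
    using assms(1-3) unfolding s step_invariant_def by (auto simp: ran_def)
  from assms(4) have "s' = (og'(v := og (p v)), c, Z) \<or> s' = s"
    unfolding s old_node_def by (auto split: if_splits)
  then show ?thesis
    using assms(1) a by (auto simp: s intro!: step_invariant_update)
qed

lemma in_set_sorted_list_of_setD: "v \<in> set (sorted_list_of_set A) \<Longrightarrow> v \<in> A"
  by (cases "finite A") auto

lemma well_formed_dstep:
  assumes "bfs_parent E r p" "well_formed E r p t s" "s' \<in> set_pmf (dstep \<alpha> \<beta> p r s)"
  shows "well_formed E r p (Suc t) s'"
proof -
  obtain og c Z where s: "s = (og, c, Z)" by (cases s) auto
  have wf: "dom og \<subseteq> gball E r t" "ran og \<subseteq> {..< c}" "\<forall>x\<in>dom og. x \<noteq> r \<longrightarrow> p x \<in> dom og"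
    using assms(2) unfolding well_formed_def s by auto
  from assms(3) obtain s1 where
    s1: "s1 \<in> set_pmf (bind_list (new_node \<alpha> p og)
            (sorted_list_of_set {v. og v = None \<and> og (p v) \<noteq> None}) (og, c, Z))" and
    s': "s' \<in> set_pmf (bind_list (old_node \<beta> p og)
            (sorted_list_of_set {v. og v \<noteq> None \<and> v \<noteq> r}) s1)"
    unfolding s dstep_eq_bind_list by auto
  have "step_invariant p og c (og, c, Z)"
    using wf unfolding step_invariant_def by auto
  then have "step_invariant p og c s1"
    using s1 by (rule bind_list_invariant[where P = "step_invariant p og c"])
      (use wf(2) in \<open>blast intro: step_invariant_new_node dest: in_set_sorted_list_of_setD\<close>)
  then have "step_invariant p og c s'"
    using s' by (rule bind_list_invariant[where P = "step_invariant p og c"])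
      (use wf(2,3) in \<open>blast intro: step_invariant_old_node dest: in_set_sorted_list_of_setD\<close>)
  then have s'_dom: "dom (fst s') \<subseteq> dom og \<union> p -` dom og" "dom og \<subseteq> dom (fst s')"
    and s'_ran: "ran (fst s') \<subseteq> {..< fst (snd s')}"
    unfolding step_invariant_def by auto
  have "gdist E r x \<le> Suc t" if x: "x \<in> dom og \<union> p -` dom og" for x
  proof (cases "x = r")
    case False
    then have "gdist E r x = Suc (gdist E r (p x))"
      using assms(1) unfolding bfs_parent_def by blast
    with x wf(1) show ?thesis unfolding gball_def by auto
  qed simp
  moreover have "p x \<in> dom og" if "x \<in> dom og \<union> p -` dom og" "x \<noteq> r" for x
    using that wf(3) by auto
  ultimately show ?thesis
    using s'_dom s'_ran unfolding well_formed_def gball_def by blast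
qed

lemma well_formed_dproc:
  "bfs_parent E r p \<Longrightarrow> s \<in> set_pmf (dproc \<alpha> \<beta> p r t) \<Longrightarrow> well_formed E r p t s"
proof (induction t arbitrary: s)
  case 0
  then show ?case by (auto simp: well_formed_def dinit_def gball_def ran_def split: if_splits)
next
  case (Suc t)
  then show ?case by (auto intro: well_formed_dstep)
qed

lemma finite_relpowp_successors:
  fixes E :: "'a \<Rightarrow> 'a \<Rightarrow> bool"
  assumes "\<And>x. finite {y. E x y}"
  shows "finite {x. (E ^^ n) r x}"
proof (induction n)
  case (Suc n)
  have "{x. (E ^^ Suc n) r x} \<subseteq> (\<Union>y\<in>{x. (E ^^ n) r x}. {z. E y z})"
    by (auto elim: relpowp_Suc_E)
  moreover have "finite (\<Union>y\<in>{x. (E ^^ n) r x}. {z. E y z})"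
    using Suc assms by blast
  ultimately show ?case by (rule finite_subset)
qed simp

lemma finite_gball:
  assumes "conn_lf_graph E"
  shows "finite (gball E r t)"
proof -
  have "gball E r t \<subseteq> (\<Union>n\<le>t. {x. (E ^^ n) r x})"
  proof
    fix x assume x: "x \<in> gball E r t"
    have "E\<^sup>*\<^sup>* r x" using assms unfolding conn_lf_graph_def by blast
    then obtain n where "(E ^^ n) r x" by (blast dest: rtranclp_imp_relpowp)
    then have "(E ^^ gdist E r x) r x" unfolding gdist_def by (rule LeastI)
    with x show "x \<in> (\<Union>n\<le>t. {x. (E ^^ n) r x})" unfolding gball_def by auto
  qed
  moreover have "finite (\<Union>n\<le>t. {x. (E ^^ n) r x})"
    using assms unfolding conn_lf_graph_def by (simp add: finite_relpowp_successors)
  ultimately show ?thesis by (rule finite_subset)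
qed

lemma root_in_gball: "r \<in> gball E r t"
  unfolding gball_def by simp

definition spin :: "int option \<Rightarrow> real" where
  "spin z = of_bool (z = Some 1) - of_bool (z = Some (-1))"

lemma spin_None [simp]: "spin None = 0"
  unfolding spin_def by simp

lemma spin_uminus [simp]: "spin (Some (- z)) = - spin (Some z)"
  unfolding spin_def by auto

lemma abs_spin_le: "\<bar>spin z\<bar> \<le> 1"
  unfolding spin_def by auto

lemma dlambda_eq_average_spin:
  assumes "conn_lf_graph E" "well_formed E r p t s"
  shows "dlambda E r t s = (\<Sum>x\<in>gball E r t. spin (dg s x)) / card (gball E r t)"
proof -
  have "{x. dg s x = Some z} = gball E r t \<inter> {x. dg s x = Some z}" for z
    using assms(2) unfolding well_formed_def dg_def by auto
  then show ?thesis
    unfolding dlambda_def spin_def sum_subtractf using finite_gball[OF assms(1)] by simp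
qed

definition discordant_spin_product :: "'a \<Rightarrow> 'a \<Rightarrow> 'a dstate \<Rightarrow> real" where
  "discordant_spin_product x y s =
     spin (dg s x) * spin (dg s y) * of_bool (dorigin s x \<noteq> dorigin s y)"

definition max_origin :: "'a \<Rightarrow> 'a \<Rightarrow> 'a dstate \<Rightarrow> nat" where
  "max_origin x y s = (case (dorigin s x, dorigin s y) of (Some a, Some b) \<Rightarrow> max a b | _ \<Rightarrow> 0)"

lemma discordant_spin_product_eq_0:
  "max_origin x y s = 0 \<Longrightarrow> discordant_spin_product x y s = 0"
  unfolding max_origin_def discordant_spin_product_def dg_def dorigin_def
  by (auto split: option.splits)

text \<open>If the origins a, b of x and y differ, exactly one of them equals max a b, so flipping
  that sign negates the product of the two spins.\<close>
lemma discordant_spin_product_flip_sign: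
  assumes "well_formed E r p t s" and "max_origin x y s = k" "1 \<le> k"
  shows "discordant_spin_product x y (flip_sign k s) = - discordant_spin_product x y s"
proof -
  obtain og c Z where s: "s = (og, c, Z)" by (cases s) auto
  obtain a b where ab: "og x = Some a" "og y = Some b" "k = max a b"
    using assms(2,3) unfolding s max_origin_def dorigin_def by (auto split: option.splits)
  show ?thesis
  proof (cases "a = b")
    case False
    have "k < c" using assms(1) ab unfolding s well_formed_def by (auto simp: ran_def)
    then have "flip_sign k s = (og, c, Z(k := - Z k))" unfolding flip_sign_def s by simp
    moreover have "a = k \<and> b \<noteq> k \<or> b = k \<and> a \<noteq> k" using ab False by linarith
    ultimately show ?thesis
      using ab unfolding discordant_spin_product_def dg_def dorigin_def s by auto
  qed (simp add: ab discordant_spin_product_def dorigin_def s)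
qed

lemma integral_discordant_spin_product_at_max_origin:
  assumes "bfs_parent E r p" "1 \<le> k"
  shows "(\<integral>s. discordant_spin_product x y s * of_bool (max_origin x y s = k) \<partial>dproc \<alpha> \<beta> p r t) = 0"
proof -
  let ?M = "dproc \<alpha> \<beta> p r t"
  let ?f = "\<lambda>s. discordant_spin_product x y s * of_bool (max_origin x y s = k)"
  have "?f (flip_sign k s) = - ?f s" if "s \<in> set_pmf ?M" for s
  proof -
    have "max_origin x y (flip_sign k s) = max_origin x y s"
      unfolding max_origin_def dorigin_def by simp
    then show ?thesis
      using discordant_spin_product_flip_sign[OF well_formed_dproc[OF assms(1) that] _ assms(2)]
      by auto
  qed
  then have "(\<integral>s. ?f (flip_sign k s) \<partial>?M) = (\<integral>s. - ?f s \<partial>?M)"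
    by (intro integral_cong_AE) (auto simp: AE_measure_pmf_iff)
  moreover have "(\<integral>s. ?f (flip_sign k s) \<partial>?M) = (\<integral>s. ?f s \<partial>?M)"
    using integral_map_pmf[of "flip_sign k" ?M ?f] by (simp add: map_flip_sign_dproc[OF assms(2)])
  ultimately show ?thesis by simp
qed

lemma integral_discordant_spin_product:
  assumes "bfs_parent E r p"
  shows "(\<integral>s. discordant_spin_product x y s \<partial>dproc \<alpha> \<beta> p r t) = 0"
proof -
  let ?M = "dproc \<alpha> \<beta> p r t"
  let ?f = "\<lambda>k s. discordant_spin_product x y s * of_bool (max_origin x y s = k)"
  define K where "K = Max (max_origin x y ` set_pmf ?M)"
  have "discordant_spin_product x y s = (\<Sum>k\<in>{1..K}. ?f k s)" if "s \<in> set_pmf ?M" for s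
  proof -
    have "max_origin x y s \<le> K"
      unfolding K_def using that by (intro Max_ge finite_imageI finite_set_dproc) auto
    then show ?thesis
      using discordant_spin_product_eq_0[of x y s] by (cases "max_origin x y s = 0") auto
  qed
  then have "(\<integral>s. discordant_spin_product x y s \<partial>?M) = (\<integral>s. (\<Sum>k\<in>{1..K}. ?f k s) \<partial>?M)"
    by (intro integral_cong_AE) (auto simp: AE_measure_pmf_iff)
  also have "\<dots> = (\<Sum>k\<in>{1..K}. \<integral>s. ?f k s \<partial>?M)"
    by (rule Bochner_Integration.integral_sum) simp
  also have "\<dots> = 0"
    using integral_discordant_spin_product_at_max_origin[OF assms] by simp
  finally show ?thesis .
qed

lemma integral_spin_product_le:
  assumes "bfs_parent E r p"
  shows "(\<integral>s. spin (dg s x) * spin (dg s y) \<partial>dproc \<alpha> \<beta> p r t)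
       \<le> (\<integral>s. of_bool (dorigin s x = dorigin s y) \<partial>dproc \<alpha> \<beta> p r t)"
proof -
  let ?M = "dproc \<alpha> \<beta> p r t"
  let ?same = "\<lambda>s. of_bool (dorigin s x = dorigin s y) :: real"
  let ?prod = "\<lambda>s. spin (dg s x) * spin (dg s y)"
  have split: "?prod s = ?prod s * ?same s + discordant_spin_product x y s" for s
    unfolding discordant_spin_product_def by (cases "dorigin s x = dorigin s y") simp_all
  have "(\<integral>s. ?prod s \<partial>?M) = (\<integral>s. ?prod s * ?same s + discordant_spin_product x y s \<partial>?M)"
    by (rule Bochner_Integration.integral_cong[OF refl split])
  also have "\<dots> = (\<integral>s. ?prod s * ?same s \<partial>?M)"
    by (simp add: integral_discordant_spin_product[OF assms])
  also have "\<dots> \<le> (\<integral>s. ?same s \<partial>?M)"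
  proof (rule integral_mono)
    fix s
    have "\<bar>?prod s\<bar> \<le> 1"
      using mult_mono[OF abs_spin_le abs_spin_le] by (simp add: abs_mult)
    then show "?prod s * ?same s \<le> ?same s" by auto
  qed simp_all
  finally show ?thesis .
qed

lemma integral_pair_pmf_finite:
  fixes f :: "_ \<Rightarrow> real"
  assumes "finite (set_pmf A)" "finite (set_pmf B)"
  shows "(\<integral>z. f z \<partial>pair_pmf A B) = (\<integral>a. (\<integral>b. f (a, b) \<partial>B) \<partial>A)"
proof -
  have "(\<integral>z. f z \<partial>pair_pmf A B) = (\<Sum>z\<in>set_pmf A \<times> set_pmf B. f z * pmf (pair_pmf A B) z)"
    using assms by (intro integral_measure_pmf_real) auto
  also have "\<dots> = (\<Sum>a\<in>set_pmf A. \<Sum>b\<in>set_pmf B. f (a, b) * (pmf A a * pmf B b))"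
    unfolding sum.cartesian_product by (intro sum.cong refl) (auto simp: pmf_pair)
  also have "\<dots> = (\<Sum>a\<in>set_pmf A. (\<Sum>b\<in>set_pmf B. f (a, b) * pmf B b) * pmf A a)"
    by (simp add: sum_distrib_left sum_distrib_right mult_ac)
  also have "\<dots> = (\<integral>a. (\<integral>b. f (a, b) \<partial>B) \<partial>A)"
    using assms by (simp add: integral_measure_pmf_real[of "set_pmf _"])
  finally show ?thesis .
qed

lemma coalesce_prob_eq_average:
  assumes "conn_lf_graph E"
  shows "coalesce_prob E r p \<alpha> \<beta> t =
    (\<Sum>u\<in>gball E r t. \<Sum>v\<in>gball E r t.
       \<integral>s. of_bool (dorigin s u = dorigin s v) \<partial>dproc \<alpha> \<beta> p r t) / (real (card (gball E r t)))\<^sup>2"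
proof -
  let ?B = "gball E r t" and ?M = "dproc \<alpha> \<beta> p r t" and ?U = "pmf_of_set (gball E r t)"
  let ?A = "{(s, u, v). dorigin s u = dorigin s v}"
  have B: "finite ?B" "?B \<noteq> {}" using finite_gball[OF assms] root_in_gball[of r E t] by auto
  have avg: "(\<integral>w. indicator ?A (s, w) \<partial>pair_pmf ?U ?U) =
      (\<Sum>u\<in>?B. \<Sum>v\<in>?B. of_bool (dorigin s u = dorigin s v)) / (real (card ?B))\<^sup>2" for s
    using B by (simp add: integral_pair_pmf_finite integral_pmf_of_set indicator_def
        sum_divide_distrib[symmetric] power2_eq_square)
  have "coalesce_prob E r p \<alpha> \<beta> t = (\<integral>z. indicator ?A z \<partial>pair_pmf ?M (pair_pmf ?U ?U))"
    unfolding coalesce_prob_def by simp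
  also have "\<dots> = (\<integral>s. (\<integral>w. indicator ?A (s, w) \<partial>pair_pmf ?U ?U) \<partial>?M)"
    using B by (intro integral_pair_pmf_finite finite_set_dproc) auto
  also have "\<dots> = (\<Sum>u\<in>?B. \<Sum>v\<in>?B. \<integral>s. of_bool (dorigin s u = dorigin s v) \<partial>?M) / (real (card ?B))\<^sup>2"
    by (simp add: avg integral_sum)
  finally show ?thesis .
qed

lemma second_moment_dlambda_le_coalesce_prob:
  assumes "conn_lf_graph E" "bfs_parent E r p"
  shows "(\<integral>s. (dlambda E r t s)\<^sup>2 \<partial>dproc \<alpha> \<beta> p r t) \<le> coalesce_prob E r p \<alpha> \<beta> t"
proof -
  let ?M = "dproc \<alpha> \<beta> p r t" and ?B = "gball E r t"
  let ?N = "(real (card ?B))\<^sup>2"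
  have "(dlambda E r t s)\<^sup>2 = (\<Sum>u\<in>?B. \<Sum>v\<in>?B. spin (dg s u) * spin (dg s v)) / ?N"
    if "s \<in> set_pmf ?M" for s
    using dlambda_eq_average_spin[OF assms(1) well_formed_dproc[OF assms(2) that]]
    by (simp add: power_divide power2_eq_square sum_product)
  then have "(\<integral>s. (dlambda E r t s)\<^sup>2 \<partial>?M)
      = (\<integral>s. (\<Sum>u\<in>?B. \<Sum>v\<in>?B. spin (dg s u) * spin (dg s v)) / ?N \<partial>?M)"
    by (intro integral_cong_AE) (auto simp: AE_measure_pmf_iff)
  also have "\<dots> = (\<Sum>u\<in>?B. \<Sum>v\<in>?B. \<integral>s. spin (dg s u) * spin (dg s v) \<partial>?M) / ?N"
    by (simp add: integral_sum)
  also have "\<dots> \<le> (\<Sum>u\<in>?B. \<Sum>v\<in>?B. \<integral>s. of_bool (dorigin s u = dorigin s v) \<partial>?M) / ?N"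
    by (intro divide_right_mono sum_mono integral_spin_product_le[OF assms(2)]) simp
  also have "\<dots> = coalesce_prob E r p \<alpha> \<beta> t"
    using coalesce_prob_eq_average[OF assms(1)] by simp
  finally show ?thesis .
qed

lemma deviation_prob_le_coalesce_prob:
  assumes "conn_lf_graph E" "bfs_parent E r p" "\<eta> > 0"
  shows "measure_pmf.prob (dproc \<alpha> \<beta> p r t)
     {s. \<bar>dlambda E r t s - measure_pmf.expectation (dproc \<alpha> \<beta> p r t) (dlambda E r t)\<bar> > \<eta>}
     \<le> coalesce_prob E r p \<alpha> \<beta> t / \<eta>\<^sup>2"
proof -
  let ?M = "dproc \<alpha> \<beta> p r t" and ?X = "dlambda E r t"
  have "measure_pmf.prob ?M {s. \<bar>?X s - measure_pmf.expectation ?M ?X\<bar> > \<eta>}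
      \<le> measure_pmf.prob ?M {s \<in> space (measure_pmf ?M). \<bar>?X s - measure_pmf.expectation ?M ?X\<bar> \<ge> \<eta>}"
    by (intro measure_pmf.finite_measure_mono) auto
  also have "\<dots> \<le> measure_pmf.variance ?M ?X / \<eta>\<^sup>2"
    using assms(3) by (intro measure_pmf.Chebyshev_inequality) simp_all
  also have "measure_pmf.variance ?M ?X \<le> (\<integral>s. (?X s)\<^sup>2 \<partial>?M)"
    by (simp add: measure_pmf.variance_eq)
  also have "\<dots> \<le> coalesce_prob E r p \<alpha> \<beta> t"
    by (rule second_moment_dlambda_le_coalesce_prob[OF assms(1,2)])
  finally show ?thesis by (simp add: divide_right_mono)
qed

lemma eventually_less_of_chebyshev_bound:
  fixes P :: "real \<Rightarrow> nat \<Rightarrow> real"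
  assumes "\<And>\<eta> t. \<eta> > 0 \<Longrightarrow> P \<eta> t \<le> q t / \<eta>\<^sup>2" and "q \<longlonglongrightarrow> 0" and "\<eta> > 0"
  shows "\<exists>t0. \<forall>t\<ge>t0. P \<eta> t < \<eta>"
proof -
  have "eventually (\<lambda>t. q t < \<eta> ^ 3) sequentially"
    using assms(2,3) by (intro order_tendstoD(2)) auto
  then obtain t0 where t0: "\<And>t. t \<ge> t0 \<Longrightarrow> q t < \<eta> ^ 3"
    by (auto simp: eventually_sequentially)
  have "P \<eta> t < \<eta>" if "t \<ge> t0" for t
  proof -
    have "q t / \<eta>\<^sup>2 < \<eta> ^ 3 / \<eta>\<^sup>2"
      using t0[OF that] assms(3) by (simp add: divide_strict_right_mono)
    also have "\<eta> ^ 3 / \<eta>\<^sup>2 = \<eta>"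
      using assms(3) by (simp add: power2_eq_square power3_eq_cube)
    finally show ?thesis using assms(1)[OF assms(3), of t] by linarith
  qed
  then show ?thesis by blast
qed

lemma stretched_exp_bound_of_chebyshev_bound:
  fixes P :: "real \<Rightarrow> nat \<Rightarrow> real"
  assumes "\<And>\<eta> t. \<eta> > 0 \<Longrightarrow> P \<eta> t \<le> q t / \<eta>\<^sup>2" and "q t \<le> exp (- c * x)"
  shows "P (exp (- (c / 4) * x)) t \<le> exp (- (c / 2) * x)"
proof -
  have "P (exp (- (c / 4) * x)) t \<le> q t / (exp (- (c / 4) * x))\<^sup>2"
    by (rule assms(1)) simp
  also have "\<dots> \<le> exp (- c * x) / exp (- (c / 2) * x)"
    using assms(2) by (simp add: power2_eq_square exp_add[symmetric] divide_right_mono)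
  also have "\<dots> = exp (- (c / 2) * x)"
    by (simp add: exp_diff[symmetric])
  finally show ?thesis .
qed

theorem mainTheorem14:
  fixes E :: "'a::linorder \<Rightarrow> 'a \<Rightarrow> bool" and r :: 'a and p :: "'a \<Rightarrow> 'a"
    and \<alpha> \<beta> :: real
  assumes "conn_lf_graph E" and "bfs_parent E r p"
    and "0 < \<alpha>" "\<alpha> < 1" "0 < \<beta>" "\<beta> < 1"
  shows "((\<lambda>t. coalesce_prob E r p \<alpha> \<beta> t) \<longlonglongrightarrow> 0 \<longrightarrow>
           (\<forall>\<eta>>0. \<exists>t0. \<forall>t\<ge>t0.
              measure_pmf.prob (dproc \<alpha> \<beta> p r t)
                {s. \<bar>dlambda E r t s - measure_pmf.expectation (dproc \<alpha> \<beta> p r t) (dlambda E r t)\<bar> > \<eta>}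
              < \<eta>))
       \<and> ((\<exists>c1 c2. c1 > 0 \<and> c2 > 0 \<and>
             (\<forall>t. coalesce_prob E r p \<alpha> \<beta> t \<le> exp (- c1 * real t powr c2))) \<longrightarrow>
          (\<exists>c3 c4 c5 c6. c3 > 0 \<and> c4 > 0 \<and> c5 > 0 \<and> c6 > 0 \<and>
             (\<forall>\<^sub>F t in sequentially.
                measure_pmf.prob (dproc \<alpha> \<beta> p r t)
                  {s. \<bar>dlambda E r t s - measure_pmf.expectation (dproc \<alpha> \<beta> p r t) (dlambda E r t)\<bar>
                      > exp (- c3 * real t powr c4)}
                \<le> exp (- c5 * real t powr c6))))"
proof (intro conjI impI allI)
  define P where "P \<eta> t = measure_pmf.prob (dproc \<alpha> \<beta> p r t)
    {s. \<bar>dlambda E r t s - measure_pmf.expectation (dproc \<alpha> \<beta> p r t) (dlambda E r t)\<bar> > \<eta>}"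
    for \<eta> t
  have chebyshev: "P \<eta> t \<le> coalesce_prob E r p \<alpha> \<beta> t / \<eta>\<^sup>2" if "\<eta> > 0" for \<eta> t
    unfolding P_def using deviation_prob_le_coalesce_prob[OF assms(1,2) that] .
  {
    fix \<eta> :: real
    assume "(\<lambda>t. coalesce_prob E r p \<alpha> \<beta> t) \<longlonglongrightarrow> 0" "\<eta> > 0"
    from eventually_less_of_chebyshev_bound[OF chebyshev this]
    show "\<exists>t0. \<forall>t\<ge>t0. P \<eta> t < \<eta>" .
  }
  assume "\<exists>c1 c2. c1 > 0 \<and> c2 > 0 \<and> (\<forall>t. coalesce_prob E r p \<alpha> \<beta> t \<le> exp (- c1 * real t powr c2))"
  then obtain c1 c2 where c: "c1 > 0" "c2 > 0"
    and decay: "\<And>t. coalesce_prob E r p \<alpha> \<beta> t \<le> exp (- c1 * real t powr c2)" by blast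
  have "P (exp (- (c1 / 4) * real t powr c2)) t \<le> exp (- (c1 / 2) * real t powr c2)" for t
    by (rule stretched_exp_bound_of_chebyshev_bound[OF chebyshev decay])
  then show "\<exists>c3 c4 c5 c6. c3 > 0 \<and> c4 > 0 \<and> c5 > 0 \<and> c6 > 0 \<and> (\<forall>\<^sub>F t in sequentially.
      P (exp (- c3 * real t powr c4)) t \<le> exp (- c5 * real t powr c6))"
    using c by (intro exI[of _ "c1 / 4"] exI[of _ c2] exI[of _ "c1 / 2"]) (auto intro: always_eventually)
qed

end
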